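(* Let $r\ge1$ and let $m_1,\ldots,m_r\ge 2$ be integers. Then for every $n\ge 0$ the coefficient of $q^n$ in the power series $H_{(m_1,\ldots,m_r)}$ is divisible by $\prod_{t=1}^{r}\mathcal{M}(m_t,t)$.
   Context: For $m\ge2$, $U_m$ is the linear operator on $\mathbb{Z}[[q]]$ given by $U_m\big(\sum_{n\ge0}a(n)q^n\big)=\sum_{n\ge0}a(mn)q^n$. Define $H_{\emptyset}:=q/(1-q)$ and recursively $H_{(m_1,\ldots,m_r)}:=U_{m_r}\Big(\frac{1}{1-q}H_{(m_1,\ldots,m_{r-1})}\Big)$ for $r\ge1$. For positive integers $m,t$, $\mathcal{M}(m,t):=\dfrac{m}{\gcd\big(m,\operatorname{lcm}(1,2,\ldots,t)\big)}$. *)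

theory Defs
  imports "HOL-Computational_Algebra.Formal_Power_Series"
begin

definition U_op :: "nat \<Rightarrow> int fps \<Rightarrow> int fps" where
  "U_op m f = Abs_fps (\<lambda>n. fps_nth f (m * n))"

definition div_one_minus_q :: "int fps \<Rightarrow> int fps" where
  "div_one_minus_q f = Abs_fps (\<lambda>n. \<Sum>k\<le>n. fps_nth f k)"

definition H_empty :: "int fps" where
  "H_empty = div_one_minus_q fps_X"

text \<open>H_rev [m_r, ..., m_1] = H_(m_1,...,m_r).\<close>
primrec H_rev :: "nat list \<Rightarrow> int fps" where
  "H_rev [] = H_empty"
| "H_rev (m # ms) = U_op m (div_one_minus_q (H_rev ms))"

definition H :: "nat list \<Rightarrow> int fps" where
  "H ms = H_rev (rev ms)"

definition MM :: "nat \<Rightarrow> nat \<Rightarrow> nat" where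
  "MM m t = m div gcd m (Lcm {1..t})"

end

theory Submission
  imports Defs
begin

text \<open>
  Write G for the coefficient sequence of H_(m_1, ..., m_r) / (1 - q). By induction on r,
  G = (\<Prod>_t M(m_t, t)) h where h is integer valued, h(0) = 0, and h has degree at most
  r + 1 in the sense that its (r + 2)-nd forward difference vanishes. In the inductive step,
  Newton's forward-difference formula writes h(m n) as the sum over 1 \<le> j \<le> d of
  C(m n, j) \<Delta>^j h(0), and M(m, d) divides C(m n, j) for 1 \<le> j \<le> d because m divides
  j C(m n, j) while gcd(m, j) divides gcd(m, lcm(1, ..., d)). The quotient n \<mapsto> h(m n) / M(m, d)
  still has degree at most d, since composing with n \<mapsto> m n does not raise the degree, and
  taking partial sums raises it by one.
\<close>

definition fwd_diff :: "(nat \<Rightarrow> 'a::ab_group_add) \<Rightarrow> nat \<Rightarrow> 'a" where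
  "fwd_diff f n = f (Suc n) - f n"

definition fwd_diff_by :: "nat \<Rightarrow> (nat \<Rightarrow> 'a::ab_group_add) \<Rightarrow> nat \<Rightarrow> 'a" where
  "fwd_diff_by m f n = f (n + m) - f n"

definition seq_degree_le :: "nat \<Rightarrow> (nat \<Rightarrow> 'a::ab_group_add) \<Rightarrow> bool" where
  "seq_degree_le d f \<longleftrightarrow> (fwd_diff ^^ Suc d) f = (\<lambda>_. 0)"

lemma funpow_fwd_diff_zero: "(fwd_diff ^^ k) (\<lambda>_. 0 :: 'a::ab_group_add) = (\<lambda>_. 0)"
  by (induction k) (simp_all add: fwd_diff_def)

lemma funpow_fwd_diff_shift:
  "(fwd_diff ^^ k) (\<lambda>n. f (n + i)) = (\<lambda>n. (fwd_diff ^^ k) f (n + i))"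
  by (induction k) (simp_all add: fwd_diff_def)

lemma funpow_fwd_diff_sum:
  "(fwd_diff ^^ k) (\<lambda>n. \<Sum>i\<in>A. f i n) = (\<lambda>n. \<Sum>i\<in>A. (fwd_diff ^^ k) (f i) n)"
  by (induction k) (simp_all add: fwd_diff_def sum_subtractf)

lemma funpow_fwd_diff_cmult:
  "(fwd_diff ^^ k) (\<lambda>n. c * f n) = (\<lambda>n. c * (fwd_diff ^^ k) f n :: 'a::ring)"
  by (induction k) (simp_all add: fwd_diff_def right_diff_distrib)

lemma funpow_fwd_diff_scale:
  "(fwd_diff ^^ k) (\<lambda>n. f (m * n)) = (\<lambda>n. (fwd_diff_by m ^^ k) f (m * n))"
  by (induction k) (simp_all add: fwd_diff_def fwd_diff_by_def algebra_simps)

lemma fwd_diff_by_eq_sum: "fwd_diff_by m f = (\<lambda>n. \<Sum>i<m. fwd_diff f (n + i))"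
proof
  fix n
  show "fwd_diff_by m f n = (\<Sum>i<m. fwd_diff f (n + i))"
    using sum_lessThan_telescope[of "\<lambda>i. f (n + i)" m]
    by (simp add: fwd_diff_by_def fwd_diff_def)
qed

lemma funpow_fwd_diff_by_eq_zero:
  assumes "(fwd_diff ^^ k) f = (\<lambda>_. 0)"
  shows "(fwd_diff_by m ^^ k) f = (\<lambda>_. 0)"
  using assms
proof (induction k arbitrary: f)
  case 0
  then show ?case by simp
next
  case (Suc k)
  have "(fwd_diff ^^ k) (fwd_diff_by m f) = (\<lambda>n. \<Sum>i<m. (fwd_diff ^^ Suc k) f (n + i))"
    by (simp add: fwd_diff_by_eq_sum funpow_fwd_diff_sum funpow_fwd_diff_shift
        funpow_Suc_right del: funpow.simps)
  also have "\<dots> = (\<lambda>_. 0)"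
    using Suc.prems by simp
  finally show ?case
    using Suc.IH by (simp add: funpow_Suc_right del: funpow.simps)
qed

lemma fwd_diff_newton:
  fixes f :: "nat \<Rightarrow> 'a::comm_ring_1"
  shows "f n = (\<Sum>j\<le>n. of_nat (n choose j) * (fwd_diff ^^ j) f 0)"
proof (induction n arbitrary: f)
  case 0
  then show ?case by simp
next
  case (Suc n)
  define a where "a j = (fwd_diff ^^ j) f 0" for j
  have diff: "fwd_diff f n = (\<Sum>j\<le>n. of_nat (n choose j) * a (Suc j))"
    using Suc.IH[of "fwd_diff f"] by (simp add: a_def funpow_Suc_right del: funpow.simps)
  have "(\<Sum>j\<le>n. of_nat (n choose j) * a j) = (\<Sum>j\<le>Suc n. of_nat (n choose j) * a j)"
    by (simp add: binomial_eq_0)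
  also have "\<dots> = a 0 + (\<Sum>j\<le>n. of_nat (n choose Suc j) * a (Suc j))"
    by (subst sum.atMost_Suc_shift) simp
  finally have val: "f n = a 0 + (\<Sum>j\<le>n. of_nat (n choose Suc j) * a (Suc j))"
    using Suc.IH[of f] by (simp add: a_def)
  have "f (Suc n) = f n + fwd_diff f n"
    by (simp add: fwd_diff_def)
  also have "\<dots> = a 0 + (\<Sum>j\<le>n. of_nat (Suc n choose Suc j) * a (Suc j))"
    by (simp add: val diff sum.distrib[symmetric] algebra_simps)
  also have "\<dots> = (\<Sum>j\<le>Suc n. of_nat (Suc n choose j) * a j)"
    by (subst sum.atMost_Suc_shift) simp
  finally show ?case
    by (simp add: a_def)
qed

lemma seq_degree_le_funpow_fwd_diff:
  assumes "seq_degree_le d f" "d < j"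
  shows "(fwd_diff ^^ j) f = (\<lambda>_. 0)"
proof -
  obtain k where "j = k + Suc d"
    using assms(2) by (auto dest: less_imp_Suc_add)
  then have "(fwd_diff ^^ j) f = (fwd_diff ^^ k) ((fwd_diff ^^ Suc d) f)"
    by (simp only: funpow_add o_apply)
  then show ?thesis
    using assms(1) by (simp add: seq_degree_le_def funpow_fwd_diff_zero del: funpow.simps)
qed

lemma seq_degree_le_zero: "seq_degree_le d (\<lambda>_. 0)"
  by (simp add: seq_degree_le_def funpow_fwd_diff_zero del: funpow.simps)

lemma seq_degree_le_scale: "seq_degree_le d f \<Longrightarrow> seq_degree_le d (\<lambda>n. f (m * n))"
  unfolding seq_degree_le_def
  by (simp only: funpow_fwd_diff_scale funpow_fwd_diff_by_eq_zero)

lemma seq_degree_le_cmult_cancel: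
  fixes f :: "nat \<Rightarrow> 'a::idom"
  assumes "c \<noteq> 0" "seq_degree_le d (\<lambda>n. c * f n)"
  shows "seq_degree_le d f"
  using assms
  by (simp add: seq_degree_le_def funpow_fwd_diff_cmult fun_eq_iff del: funpow.simps)

lemma seq_degree_le_partial_sums:
  assumes "seq_degree_le d f"
  shows "seq_degree_le (Suc d) (\<lambda>n. \<Sum>k\<le>n. f k)"
proof -
  have "fwd_diff (\<lambda>n. \<Sum>k\<le>n. f k) = (\<lambda>n. f (n + 1))"
    by (simp add: fwd_diff_def fun_eq_iff)
  then have "(fwd_diff ^^ Suc (Suc d)) (\<lambda>n. \<Sum>k\<le>n. f k)
      = (fwd_diff ^^ Suc d) (\<lambda>n. f (n + 1))"
    by (simp only: funpow_Suc_right o_apply)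
  also have "\<dots> = (\<lambda>n. (fwd_diff ^^ Suc d) f (n + 1))"
    by (rule funpow_fwd_diff_shift)
  finally show ?thesis
    using assms by (simp add: seq_degree_le_def del: funpow.simps)
qed

lemma MM_dvd_choose:
  assumes "1 \<le> j" "j \<le> d"
  shows "MM m d dvd (m * n choose j)"
proof -
  define C where "C = m * n choose j"
  define g where "g = gcd m (Lcm {1..d})"
  have "j * C = m * n * ((m * n - 1) choose (j - 1))"
    using times_binomial_minus1_eq[of j "m * n"] assms(1) by (simp add: C_def)
  then have "m dvd gcd (m * C) (j * C)"
    by simp
  then have "m dvd C * gcd m j"
    by (simp add: gcd_mult_distrib_nat ac_simps)
  moreover have "gcd m j dvd g"
    using assms by (simp add: g_def) (meson atLeastAtMost_iff dvd_Lcm dvd_trans gcd_dvd2)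
  ultimately have "m dvd C * g"
    by (meson dvd_trans mult_dvd_mono dvd_refl)
  moreover have "MM m d * g = m"
    by (simp add: MM_def g_def)
  ultimately have "MM m d * g dvd C * g"
    by simp
  moreover have "g \<noteq> 0"
    by (simp add: g_def Lcm_0_iff_nat)
  ultimately show ?thesis
    by (simp add: C_def dvd_mult_cancel2)
qed

lemma MM_dvd_scaled_value:
  fixes h :: "nat \<Rightarrow> int"
  assumes "seq_degree_le d h" "h 0 = 0"
  shows "int (MM m d) dvd h (m * n)"
proof -
  have "int (MM m d) dvd of_nat (m * n choose j) * (fwd_diff ^^ j) h 0" for j
  proof (cases "j = 0 \<or> d < j")
    case True
    then show ?thesis
      using assms seq_degree_le_funpow_fwd_diff by fastforce
  next
    case False
    then show ?thesis
      by (simp add: MM_dvd_choose)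
  qed
  then show ?thesis
    by (subst fwd_diff_newton) (simp add: dvd_sum)
qed

lemma scaled_values_factor:
  fixes h :: "nat \<Rightarrow> int"
  assumes "seq_degree_le d h" "h 0 = 0"
  obtains h' where "seq_degree_le d h'" "h' 0 = 0" "\<And>n. h (m * n) = int (MM m d) * h' n"
proof (cases "MM m d = 0")
  case True
  then have "m = 0"
    by (simp add: MM_def Lcm_0_iff_nat dvd_div_eq_0_iff)
  show ?thesis
    by (rule that[of "\<lambda>_. 0"]) (simp_all add: seq_degree_le_zero \<open>m = 0\<close> assms(2))
next
  case False
  define h' where "h' n = h (m * n) div int (MM m d)" for n
  have factor: "h (m * n) = int (MM m d) * h' n" for n
    using MM_dvd_scaled_value[OF assms] by (simp add: h'_def)
  then have "(\<lambda>n. h (m * n)) = (\<lambda>n. int (MM m d) * h' n)"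
    by simp
  then have "seq_degree_le d (\<lambda>n. int (MM m d) * h' n)"
    using seq_degree_le_scale[OF assms(1)] by metis
  then have "seq_degree_le d h'"
    by (rule seq_degree_le_cmult_cancel[rotated]) (simp add: False)
  moreover have "h' 0 = 0"
    using assms(2) by (simp add: h'_def)
  ultimately show ?thesis
    using that factor by blast
qed

definition MM_prod :: "nat list \<Rightarrow> nat" where
  "MM_prod ms = (\<Prod>t=1..length ms. MM (ms ! (t - 1)) t)"

lemma MM_prod_snoc: "MM_prod (ms @ [m]) = MM_prod ms * MM m (Suc (length ms))"
proof -
  have "(\<Prod>t=1..length ms. MM ((ms @ [m]) ! (t - 1)) t) = MM_prod ms"
    unfolding MM_prod_def by (rule prod.cong) (auto simp: nth_append)
  then show ?thesis
    by (simp add: MM_prod_def nth_append)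
qed

lemma fps_nth_H_snoc:
  "fps_nth (H (ms @ [m])) n = fps_nth (div_one_minus_q (H ms)) (m * n)"
  by (simp add: H_def U_op_def)

lemma fps_nth_div_one_minus_q_H_Nil: "fps_nth (div_one_minus_q (H [])) n = int n"
proof -
  have "(\<Sum>i\<le>k. fps_nth fps_X i) = (if k = 0 then 0 else 1 :: int)" for k
    by (induction k) auto
  moreover have "(\<Sum>k\<le>n. if k = 0 then 0 else 1 :: int) = int n"
    by (induction n) auto
  ultimately show ?thesis
    by (simp add: H_def H_empty_def div_one_minus_q_def)
qed

lemma partial_sums_H_factor:
  obtains h :: "nat \<Rightarrow> int"
  where "seq_degree_le (Suc (length ms)) h" "h 0 = 0"
    "\<And>n. fps_nth (div_one_minus_q (H ms)) n = int (MM_prod ms) * h n"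
proof (induction ms arbitrary: thesis rule: rev_induct)
  case Nil
  have "seq_degree_le (Suc 0) (\<lambda>n. int n)"
    by (simp add: seq_degree_le_def fwd_diff_def fun_eq_iff)
  then show ?case
    using Nil[of "\<lambda>n. int n"] by (simp add: fps_nth_div_one_minus_q_H_Nil MM_prod_def)
next
  case (snoc m ms)
  obtain h where h: "seq_degree_le (Suc (length ms)) h" "h 0 = 0"
    and G: "\<And>n. fps_nth (div_one_minus_q (H ms)) n = int (MM_prod ms) * h n"
    using snoc.IH by blast
  obtain h' where h': "seq_degree_le (Suc (length ms)) h'" "h' 0 = 0"
    and factor: "\<And>n. h (m * n) = int (MM m (Suc (length ms))) * h' n"
    using scaled_values_factor[OF h] by blast
  have "fps_nth (H (ms @ [m])) k = int (MM_prod (ms @ [m])) * h' k" for k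
    by (simp add: fps_nth_H_snoc G factor MM_prod_snoc)
  then have "fps_nth (div_one_minus_q (H (ms @ [m]))) n
          = int (MM_prod (ms @ [m])) * (\<Sum>k\<le>n. h' k)" for n
    by (simp add: div_one_minus_q_def sum_distrib_left)
  moreover have "seq_degree_le (Suc (length (ms @ [m]))) (\<lambda>n. \<Sum>k\<le>n. h' k)"
    using seq_degree_le_partial_sums[OF h'(1)] by simp
  ultimately show ?case
    using snoc.prems h'(2) by simp
qed

theorem lemma2p8:
  fixes ms :: "nat list" and n :: nat
  assumes "length ms \<ge> 1"
    and "\<forall>i<length ms. ms ! i \<ge> 2"
  shows "int (\<Prod>t=1..length ms. MM (ms ! (t - 1)) t) dvd fps_nth (H ms) n"
proof (cases ms rule: rev_cases)
  case Nil
  then show ?thesis by simp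
next
  case (snoc ms' m)
  obtain h where h: "seq_degree_le (Suc (length ms')) h" "h 0 = 0"
    and G: "\<And>n. fps_nth (div_one_minus_q (H ms')) n = int (MM_prod ms') * h n"
    using partial_sums_H_factor by blast
  have "int (MM m (Suc (length ms'))) dvd h (m * n)"
    using MM_dvd_scaled_value[OF h] .
  then have "int (MM_prod (ms' @ [m])) dvd fps_nth (H (ms' @ [m])) n"
    by (simp add: fps_nth_H_snoc G MM_prod_snoc)
  then show ?thesis
    by (simp add: snoc MM_prod_def)
qed

end
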